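(* Let $(G,\theta_G,(-1)^F_G)$ and $(H,\theta_H,(-1)^F_H)$ be fermionic groups. Equip the space $G\otimes H:=(G\times H)/\langle((-1)^F_G,(-1)^F_H)\rangle$, with elements written $g\otimes h$, with the following data: \begin{itemize} \item the product $(g_1\otimes h_1)(g_2\otimes h_2)=((-1)^F_G)^{\theta_G(g_2)\theta_H(h_1)}\,g_1g_2\otimes h_1h_2$; \item the element $1\otimes(-1)^F_H=(-1)^F_G\otimes 1$; \item the map $\theta(g\otimes h)=\theta_G(g)+\theta_H(h)$. \end{itemize} Then the product is well defined, and with these data $G\otimes H$ is a fermionic group.
   Context: A fermionic group is a topological group $G$ together with a central element $(-1)^F\in G$ with $((-1)^F)^2=1$ and a continuous homomorphism $\theta:G\to\mathbb{Z}_2=\{0,1\}$, written additively, satisfying $\theta((-1)^F)=0$. *)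

theory Defs
  imports "HOL-Analysis.Analysis" "HOL-Algebra.Group"
begin

definition topological_group :: "'a monoid \<Rightarrow> 'a topology \<Rightarrow> bool" where
  "topological_group G T \<longleftrightarrow> group G \<and> topspace T = carrier G \<and>
     continuous_map (prod_topology T T) T (\<lambda>(x, y). x \<otimes>\<^bsub>G\<^esub> y) \<and>
     continuous_map T T (\<lambda>x. inv\<^bsub>G\<^esub> x)"

definition fermionic_group :: "'a monoid \<Rightarrow> 'a topology \<Rightarrow> 'a \<Rightarrow> ('a \<Rightarrow> nat) \<Rightarrow> bool" where
  "fermionic_group G T f \<theta> \<longleftrightarrow> topological_group G T \<and>
     f \<in> carrier G \<and> (\<forall>x\<in>carrier G. f \<otimes>\<^bsub>G\<^esub> x = x \<otimes>\<^bsub>G\<^esub> f) \<and>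
     f \<otimes>\<^bsub>G\<^esub> f = \<one>\<^bsub>G\<^esub> \<and>
     (\<forall>x\<in>carrier G. \<theta> x \<in> {0, 1}) \<and>
     (\<forall>x\<in>carrier G. \<forall>y\<in>carrier G. \<theta> (x \<otimes>\<^bsub>G\<^esub> y) = (\<theta> x + \<theta> y) mod 2) \<and>
     continuous_map T (discrete_topology {0, 1}) \<theta> \<and>
     \<theta> f = 0"

definition quotient_topology :: "'a topology \<Rightarrow> ('a \<Rightarrow> 'b) \<Rightarrow> 'b set \<Rightarrow> 'b topology" where
  "quotient_topology T q Y = topology (\<lambda>U. U \<subseteq> Y \<and> openin T {x \<in> topspace T. q x \<in> U})"

definition tens_rel :: "'a monoid \<Rightarrow> 'b monoid \<Rightarrow> 'a \<Rightarrow> 'b \<Rightarrow> (('a \<times> 'b) \<times> ('a \<times> 'b)) set" where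
  "tens_rel G H fG fH = {(p, q). p \<in> carrier G \<times> carrier H \<and> q \<in> carrier G \<times> carrier H \<and>
      (q = p \<or> q = (fG \<otimes>\<^bsub>G\<^esub> fst p, fH \<otimes>\<^bsub>H\<^esub> snd p) \<or> p = (fG \<otimes>\<^bsub>G\<^esub> fst q, fH \<otimes>\<^bsub>H\<^esub> snd q))}"

definition tens_class :: "'a monoid \<Rightarrow> 'b monoid \<Rightarrow> 'a \<Rightarrow> 'b \<Rightarrow> 'a \<Rightarrow> 'b \<Rightarrow> ('a \<times> 'b) set" where
  "tens_class G H fG fH g h = tens_rel G H fG fH `` {(g, h)}"

definition tens_pmult :: "'a monoid \<Rightarrow> 'b monoid \<Rightarrow> 'a \<Rightarrow> ('a \<Rightarrow> nat) \<Rightarrow> ('b \<Rightarrow> nat)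
    \<Rightarrow> 'a \<times> 'b \<Rightarrow> 'a \<times> 'b \<Rightarrow> 'a \<times> 'b" where
  "tens_pmult G H fG \<theta>G \<theta>H p q =
     ((fG [^]\<^bsub>G\<^esub> (\<theta>G (fst q) * \<theta>H (snd p))) \<otimes>\<^bsub>G\<^esub> fst p \<otimes>\<^bsub>G\<^esub> fst q,
      snd p \<otimes>\<^bsub>H\<^esub> snd q)"

definition tens_group :: "'a monoid \<Rightarrow> 'b monoid \<Rightarrow> 'a \<Rightarrow> 'b \<Rightarrow> ('a \<Rightarrow> nat) \<Rightarrow> ('b \<Rightarrow> nat)
    \<Rightarrow> ('a \<times> 'b) set monoid" where
  "tens_group G H fG fH \<theta>G \<theta>H =
     \<lparr> carrier = (carrier G \<times> carrier H) // tens_rel G H fG fH,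
       mult = (\<lambda>X Y. \<Union>p\<in>X. \<Union>q\<in>Y. tens_rel G H fG fH `` {tens_pmult G H fG \<theta>G \<theta>H p q}),
       one = tens_class G H fG fH \<one>\<^bsub>G\<^esub> \<one>\<^bsub>H\<^esub> \<rparr>"

definition tens_topology :: "'a monoid \<Rightarrow> 'b monoid \<Rightarrow> 'a \<Rightarrow> 'b \<Rightarrow> 'a topology \<Rightarrow> 'b topology
    \<Rightarrow> ('a \<times> 'b) set topology" where
  "tens_topology G H fG fH TG TH =
     quotient_topology (prod_topology TG TH) (\<lambda>p. tens_rel G H fG fH `` {p})
       ((carrier G \<times> carrier H) // tens_rel G H fG fH)"

definition tens_theta :: "('a \<Rightarrow> nat) \<Rightarrow> ('b \<Rightarrow> nat) \<Rightarrow> ('a \<times> 'b) set \<Rightarrow> nat" where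
  "tens_theta \<theta>G \<theta>H X = (let p = (SOME p. p \<in> X) in (\<theta>G (fst p) + \<theta>H (snd p)) mod 2)"

end

theory Submission
  imports Defs
begin

text \<open>The subgroup generated by ((-1)^F_G, (-1)^F_H) acts on G \<times> H by the continuous involution
  twist, and the sign-twisted product commutes with twist in either argument; hence the product is
  well defined on classes.  Associativity reduces to a congruence mod 2 between the exponents of
  the central involution (-1)^F_G, and the inverse of g \<otimes> h is
  ((-1)^F_G)^(\<theta>(g)\<theta>(h)) g^-1 \<otimes> h^-1.  The quotient by an involution is an open map, so the
  product of two copies of the quotient map is again a quotient map; continuity of multiplication,
  inversion and \<theta> on G \<otimes> H then follows from continuity on representatives, where the sign
  factor is continuous because \<theta>_G and \<theta>_H are locally constant.\<close>

lemma open_map_prod_map: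
  assumes f: "open_map X X' f" and g: "open_map Y Y' g"
  shows "open_map (prod_topology X Y) (prod_topology X' Y') (\<lambda>(x, y). (f x, g y))"
  unfolding open_map_def
proof (intro allI impI)
  fix W assume W: "openin (prod_topology X Y) W"
  show "openin (prod_topology X' Y') ((\<lambda>(x, y). (f x, g y)) ` W)"
    unfolding openin_prod_topology_alt
  proof (intro allI impI)
    fix x' y' assume "(x', y') \<in> (\<lambda>(x, y). (f x, g y)) ` W"
    then obtain x y where xy: "(x, y) \<in> W" "x' = f x" "y' = g y" by auto
    obtain U V where UV: "openin X U" "openin Y V" "x \<in> U" "y \<in> V" "U \<times> V \<subseteq> W"
      using openin_prod_topology_alt[THEN iffD1, OF W, rule_format, OF xy(1)] by blast
    have "openin X' (f ` U)" "openin Y' (g ` V)"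
      using f g UV(1,2) by (simp_all add: open_map_def)
    moreover have "f ` U \<times> g ` V \<subseteq> (\<lambda>(x, y). (f x, g y)) ` W"
    proof (clarify)
      fix a b assume "a \<in> U" "b \<in> V"
      then show "(f a, g b) \<in> (\<lambda>(x, y). (f x, g y)) ` W"
        using UV(5) by (auto intro: rev_image_eqI)
    qed
    ultimately show "\<exists>U' V'. openin X' U' \<and> openin Y' V' \<and> x' \<in> U' \<and> y' \<in> V' \<and>
        U' \<times> V' \<subseteq> (\<lambda>(x, y). (f x, g y)) ` W"
      using UV(3,4) xy(2,3) by blast
  qed
qed

lemma openin_quotient_topology:
  "openin (quotient_topology X q Y) U \<longleftrightarrow> U \<subseteq> Y \<and> openin X {x \<in> topspace X. q x \<in> U}"
proof -
  let ?L = "\<lambda>U. U \<subseteq> Y \<and> openin X {x \<in> topspace X. q x \<in> U}"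
  have Int: "?L (S \<inter> S')" if "?L S" "?L S'" for S S'
  proof -
    have "{x \<in> topspace X. q x \<in> S \<inter> S'} =
        {x \<in> topspace X. q x \<in> S} \<inter> {x \<in> topspace X. q x \<in> S'}" by auto
    then show ?thesis using that by auto
  qed
  have Union: "?L (\<Union>K)" if "\<forall>S\<in>K. ?L S" for K
  proof -
    have "{x \<in> topspace X. q x \<in> \<Union>K} = (\<Union>S\<in>K. {x \<in> topspace X. q x \<in> S})" by auto
    then show ?thesis using that by auto
  qed
  have "istopology ?L"
    unfolding istopology_def using Int Union by blast
  then show ?thesis unfolding quotient_topology_def by simp
qed

lemma topspace_quotient_topology:
  assumes "q ` topspace X \<subseteq> Y"
  shows "topspace (quotient_topology X q Y) = Y"
proof -
  have "{x \<in> topspace X. q x \<in> Y} = topspace X"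
    using assms by auto
  then have "openin (quotient_topology X q Y) Y"
    by (simp add: openin_quotient_topology)
  then show ?thesis
    using openin_subset by (force simp: topspace_def openin_quotient_topology)
qed

lemma quotient_map_quotient_topology:
  assumes "q ` topspace X = Y"
  shows "quotient_map X (quotient_topology X q Y) q"
  using assms unfolding quotient_map_def
  by (simp add: topspace_quotient_topology openin_quotient_topology)

lemma open_map_quotient_by_involution:
  assumes q: "quotient_map X Y q" and s: "continuous_map X X s"
    and fibre: "\<And>x y. x \<in> topspace X \<Longrightarrow> y \<in> topspace X \<Longrightarrow> q x = q y \<longleftrightarrow> y = x \<or> y = s x"
  shows "open_map X Y q"
  unfolding open_map_def
proof (intro allI impI)
  fix V assume V: "openin X V"
  have sX: "s x \<in> topspace X" if "x \<in> topspace X" for x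
    using continuous_map_image_subset_topspace[OF s] that by blast
  have "{x \<in> topspace X. q x \<in> q ` V} = V \<union> {x \<in> topspace X. s x \<in> V}"
    using openin_subset[OF V] fibre sX by blast
  moreover have "openin X (V \<union> {x \<in> topspace X. s x \<in> V})"
    using V openin_continuous_map_preimage[OF s V] by blast
  moreover have "q ` V \<subseteq> topspace Y"
    using openin_subset[OF V] quotient_imp_surjective_map[OF q] by blast
  ultimately show "openin Y (q ` V)"
    using q unfolding quotient_map_def by auto
qed

lemma continuous_map_discrete_compose2:
  assumes f: "continuous_map X (discrete_topology A) f"
    and g: "continuous_map X (discrete_topology B) g"
    and h: "\<And>a b. a \<in> A \<Longrightarrow> b \<in> B \<Longrightarrow> h a b \<in> topspace Y"
  shows "continuous_map X Y (\<lambda>x. h (f x) (g x))"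
proof -
  have "continuous_map X (discrete_topology (A \<times> B)) (\<lambda>x. (f x, g x))"
    unfolding prod_topology_discrete_topology using f g by (rule continuous_map_pairedI)
  moreover have "continuous_map (discrete_topology (A \<times> B)) Y (\<lambda>(a, b). h a b)"
    using h by auto
  ultimately show ?thesis
    using continuous_map_compose by (fastforce simp: o_def)
qed

lemma topological_group_continuous_mult:
  assumes "topological_group G T" "continuous_map X T f" "continuous_map X T g"
  shows "continuous_map X T (\<lambda>x. f x \<otimes>\<^bsub>G\<^esub> g x)"
  using continuous_map_compose[OF continuous_map_pairedI[OF assms(2,3)]] assms(1)
  by (fastforce simp: topological_group_def o_def)

lemma topological_group_continuous_inv:
  assumes "topological_group G T" "continuous_map X T f"
  shows "continuous_map X T (\<lambda>x. inv\<^bsub>G\<^esub> f x)"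
  using continuous_map_compose[OF assms(2)] assms(1)
  by (fastforce simp: topological_group_def o_def)

locale fermionic =
  fixes G :: "'a monoid" (structure) and T :: "'a topology" and f :: 'a and \<theta> :: "'a \<Rightarrow> nat"
  assumes fermionic_group: "fermionic_group G T f \<theta>"
begin

lemma topological_group: "topological_group G T"
  using fermionic_group by (simp add: fermionic_group_def)

sublocale group G
  using topological_group by (simp add: topological_group_def)

lemma topspace_eq [simp]: "topspace T = carrier G"
  using topological_group by (simp add: topological_group_def)

lemma f_closed [simp]: "f \<in> carrier G"
  and f_central: "x \<in> carrier G \<Longrightarrow> f \<otimes> x = x \<otimes> f"
  and f_square: "f \<otimes> f = \<one>"
  and theta_range: "x \<in> carrier G \<Longrightarrow> \<theta> x \<in> {0, 1}"
  and theta_mult: "x \<in> carrier G \<Longrightarrow> y \<in> carrier G \<Longrightarrow> \<theta> (x \<otimes> y) = (\<theta> x + \<theta> y) mod 2"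
  and continuous_map_theta: "continuous_map T (discrete_topology {0, 1}) \<theta>"
  and theta_f [simp]: "\<theta> f = 0"
  using fermionic_group by (simp_all add: fermionic_group_def)

lemma theta_mod2 [simp]: "x \<in> carrier G \<Longrightarrow> \<theta> x mod 2 = \<theta> x"
  using theta_range[of x] by auto

lemma theta_one [simp]: "\<theta> \<one> = 0"
  using theta_mult[of \<one> \<one>] theta_range[of \<one>] by auto

lemma theta_inv [simp]: "x \<in> carrier G \<Longrightarrow> \<theta> (inv x) = \<theta> x"
  using theta_mult[of "inv x" x] theta_range[of x] theta_range[of "inv x"] by auto

lemma theta_f_mult [simp]: "x \<in> carrier G \<Longrightarrow> \<theta> (f \<otimes> x) = \<theta> x"
  by (simp add: theta_mult)

lemma f_pow_mod2: "f [^] (n::nat) = f [^] (n mod 2)"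
proof -
  have "f [^] n = (f [^] (2::nat)) [^] (n div 2) \<otimes> f [^] (n mod 2)"
    by (simp add: nat_pow_pow nat_pow_mult)
  also have "f [^] (2::nat) = \<one>"
    using f_square by (simp add: numeral_2_eq_2)
  finally show ?thesis by simp
qed

lemma f_pow_cong_mod2: "(m::nat) mod 2 = n mod 2 \<Longrightarrow> f [^] m = f [^] n"
  by (metis f_pow_mod2)

lemma f_pow_central: "x \<in> carrier G \<Longrightarrow> f [^] (n::nat) \<otimes> x = x \<otimes> f [^] n"
  by (simp add: group_commutes_pow f_central)

lemma f_pow_left_commute:
  "x \<in> carrier G \<Longrightarrow> y \<in> carrier G \<Longrightarrow> x \<otimes> (f [^] (n::nat) \<otimes> y) = f [^] n \<otimes> (x \<otimes> y)"
  by (metis f_closed f_pow_central m_assoc nat_pow_closed)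

lemma f_pow_pow_mult:
  "x \<in> carrier G \<Longrightarrow> f [^] (m::nat) \<otimes> (f [^] (n::nat) \<otimes> x) = f [^] (m + n) \<otimes> x"
  by (simp add: m_assoc[symmetric] nat_pow_mult)

lemma f_left_commute: "x \<in> carrier G \<Longrightarrow> y \<in> carrier G \<Longrightarrow> x \<otimes> (f \<otimes> y) = f \<otimes> (x \<otimes> y)"
  by (metis f_central f_closed m_assoc)

lemma theta_f_pow [simp]: "\<theta> (f [^] (n::nat)) = 0"
  by (induction n) (simp_all add: theta_mult)

lemma f_pow_double: "f [^] ((n::nat) + n) = \<one>"
  by (metis f_pow_mod2 mod2_eq_if even_add nat_pow_0)

lemma theta_f_pow_mult [simp]: "x \<in> carrier G \<Longrightarrow> \<theta> (f [^] (n::nat) \<otimes> x) = \<theta> x"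
  by (simp add: theta_mult)

end

locale fermionic_pair =
  G: fermionic G TG fG \<theta>G + H: fermionic H TH fH \<theta>H
  for G :: "'a monoid" and TG fG \<theta>G and H :: "'b monoid" and TH fH \<theta>H
begin

abbreviation "cls p \<equiv> tens_rel G H fG fH `` {p}"
abbreviation "pmult \<equiv> tens_pmult G H fG \<theta>G \<theta>H"

definition twist :: "'a \<times> 'b \<Rightarrow> 'a \<times> 'b" where
  "twist p = (fG \<otimes>\<^bsub>G\<^esub> fst p, fH \<otimes>\<^bsub>H\<^esub> snd p)"

lemma twist_closed: "p \<in> carrier G \<times> carrier H \<Longrightarrow> twist p \<in> carrier G \<times> carrier H"
  by (auto simp: twist_def)

lemma twist_twist: "p \<in> carrier G \<times> carrier H \<Longrightarrow> twist (twist p) = p"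
  by (auto simp: twist_def G.m_assoc[symmetric] H.m_assoc[symmetric] G.f_square H.f_square)

lemma tens_rel_Image:
  assumes "p \<in> carrier G \<times> carrier H"
  shows "cls p = {p, twist p}"
  using assms twist_closed[OF assms] twist_twist[OF assms]
  unfolding tens_rel_def twist_def by auto

lemma tens_rel_Image_eq_iff:
  assumes "p \<in> carrier G \<times> carrier H" "q \<in> carrier G \<times> carrier H"
  shows "cls p = cls q \<longleftrightarrow> q = p \<or> q = twist p"
  using assms twist_closed twist_twist by (auto simp: tens_rel_Image doubleton_eq_iff)

lemma tens_pmult_Pair:
  "pmult (g1, h1) (g2, h2) =
     (fG [^]\<^bsub>G\<^esub> (\<theta>G g2 * \<theta>H h1) \<otimes>\<^bsub>G\<^esub> g1 \<otimes>\<^bsub>G\<^esub> g2, h1 \<otimes>\<^bsub>H\<^esub> h2)"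
  by (simp add: tens_pmult_def)

lemma tens_pmult_closed:
  "p \<in> carrier G \<times> carrier H \<Longrightarrow> q \<in> carrier G \<times> carrier H \<Longrightarrow> pmult p q \<in> carrier G \<times> carrier H"
  by (auto simp: tens_pmult_def)

lemma tens_pmult_twist_left:
  assumes "p \<in> carrier G \<times> carrier H" "q \<in> carrier G \<times> carrier H"
  shows "pmult (twist p) q = twist (pmult p q)"
  using assms
  by (auto simp: tens_pmult_def twist_def G.m_assoc H.m_assoc G.f_pow_left_commute)

lemma tens_pmult_twist_right:
  assumes "p \<in> carrier G \<times> carrier H" "q \<in> carrier G \<times> carrier H"
  shows "pmult p (twist q) = twist (pmult p q)"
proof -
  obtain g1 h1 g2 h2 where pq: "p = (g1, h1)" "q = (g2, h2)"
    and carrier: "g1 \<in> carrier G" "h1 \<in> carrier H" "g2 \<in> carrier G" "h2 \<in> carrier H"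
    using assms by auto
  show ?thesis
    unfolding pq using carrier
    by (simp add: tens_pmult_Pair twist_def G.m_assoc H.m_assoc G.f_pow_left_commute
      G.f_left_commute[of g1] H.f_left_commute[of h1])
qed

lemma tens_pmult_respects:
  assumes "p \<in> carrier G \<times> carrier H" "p' \<in> carrier G \<times> carrier H"
    and "q \<in> carrier G \<times> carrier H" "q' \<in> carrier G \<times> carrier H"
    and "cls p = cls p'" "cls q = cls q'"
  shows "cls (pmult p q) = cls (pmult p' q')"
proof -
  have "p' = p \<or> p' = twist p" "q' = q \<or> q' = twist q"
    using assms tens_rel_Image_eq_iff by auto
  then have "pmult p' q' = pmult p q \<or> pmult p' q' = twist (pmult p q)"
    using assms tens_pmult_twist_left tens_pmult_twist_right twist_closed twist_twist tens_pmult_closed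
    by metis
  then show ?thesis
    using assms(1,3) tens_pmult_closed tens_pmult_twist_left tens_rel_Image_eq_iff twist_closed
    by metis
qed

lemma tens_pmult_assoc:
  assumes "a \<in> carrier G" "c \<in> carrier G" "e \<in> carrier G"
    and "b \<in> carrier H" "d \<in> carrier H" "k \<in> carrier H"
  shows "pmult (pmult (a, b) (c, d)) (e, k) = pmult (a, b) (pmult (c, d) (e, k))"
proof -
  have L: "pmult (pmult (a, b) (c, d)) (e, k) =
      (fG [^]\<^bsub>G\<^esub> (\<theta>G e * \<theta>H (b \<otimes>\<^bsub>H\<^esub> d) + \<theta>G c * \<theta>H b) \<otimes>\<^bsub>G\<^esub> (a \<otimes>\<^bsub>G\<^esub> (c \<otimes>\<^bsub>G\<^esub> e)),
       b \<otimes>\<^bsub>H\<^esub> (d \<otimes>\<^bsub>H\<^esub> k))"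
    using assms by (simp add: tens_pmult_Pair G.m_assoc H.m_assoc G.f_pow_pow_mult)
  have R: "pmult (a, b) (pmult (c, d) (e, k)) =
      (fG [^]\<^bsub>G\<^esub> (\<theta>G (c \<otimes>\<^bsub>G\<^esub> e) * \<theta>H b + \<theta>G e * \<theta>H d) \<otimes>\<^bsub>G\<^esub> (a \<otimes>\<^bsub>G\<^esub> (c \<otimes>\<^bsub>G\<^esub> e)),
       b \<otimes>\<^bsub>H\<^esub> (d \<otimes>\<^bsub>H\<^esub> k))"
    using assms by (simp add: tens_pmult_Pair G.m_assoc H.m_assoc G.f_pow_pow_mult
        G.f_pow_left_commute[of a])
  have "\<theta>G c \<in> {0, 1}" "\<theta>G e \<in> {0, 1}" "\<theta>H b \<in> {0, 1}" "\<theta>H d \<in> {0, 1}"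
    using assms G.theta_range H.theta_range by simp_all
  then have "(\<theta>G e * \<theta>H (b \<otimes>\<^bsub>H\<^esub> d) + \<theta>G c * \<theta>H b) mod 2
      = (\<theta>G (c \<otimes>\<^bsub>G\<^esub> e) * \<theta>H b + \<theta>G e * \<theta>H d) mod 2"
    using assms by (auto simp: G.theta_mult H.theta_mult)
  from G.f_pow_cong_mod2[OF this] show ?thesis
    unfolding L R by simp
qed

abbreviation "Q \<equiv> tens_group G H fG fH \<theta>G \<theta>H"

lemma carrier_tens_group: "carrier Q = (carrier G \<times> carrier H) // tens_rel G H fG fH"
  by (simp add: tens_group_def)

lemma one_tens_group: "\<one>\<^bsub>Q\<^esub> = cls (\<one>\<^bsub>G\<^esub>, \<one>\<^bsub>H\<^esub>)"
  by (simp add: tens_group_def tens_class_def)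

lemma cls_in_carrier: "p \<in> carrier G \<times> carrier H \<Longrightarrow> cls p \<in> carrier Q"
  unfolding carrier_tens_group by (rule quotientI)

lemma tens_group_carrierE:
  assumes "X \<in> carrier Q"
  obtains g h where "X = cls (g, h)" "g \<in> carrier G" "h \<in> carrier H"
  using assms unfolding carrier_tens_group by (auto elim!: quotientE)

lemma tens_rel_Image_memD:
  assumes "p \<in> carrier G \<times> carrier H" "p' \<in> cls p"
  shows "p' \<in> carrier G \<times> carrier H" "cls p' = cls p"
proof -
  have p': "p' = p \<or> p' = twist p"
    using assms tens_rel_Image by blast
  show in_carrier: "p' \<in> carrier G \<times> carrier H"
    using p' assms(1) twist_closed by blast
  show "cls p' = cls p"
    using p' tens_rel_Image_eq_iff[OF assms(1) in_carrier] by auto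
qed

lemma tens_group_mult_cls:
  assumes p: "p \<in> carrier G \<times> carrier H" and q: "q \<in> carrier G \<times> carrier H"
  shows "cls p \<otimes>\<^bsub>Q\<^esub> cls q = cls (pmult p q)"
proof -
  have "cls (pmult p' q') = cls (pmult p q)" if "p' \<in> cls p" "q' \<in> cls q" for p' q'
    using that p q tens_rel_Image_memD tens_pmult_respects by metis
  then have "(\<Union>p'\<in>cls p. \<Union>q'\<in>cls q. cls (pmult p' q')) = (\<Union>p'\<in>cls p. \<Union>q'\<in>cls q. cls (pmult p q))"
    by simp
  also have "\<dots> = cls (pmult p q)"
    using p q by (auto simp: tens_rel_Image)
  finally show ?thesis
    by (simp add: tens_group_def)
qed

definition tens_pinv :: "'a \<times> 'b \<Rightarrow> 'a \<times> 'b" where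
  "tens_pinv p = (fG [^]\<^bsub>G\<^esub> (\<theta>G (fst p) * \<theta>H (snd p)) \<otimes>\<^bsub>G\<^esub> inv\<^bsub>G\<^esub> fst p, inv\<^bsub>H\<^esub> snd p)"

lemma tens_pinv_closed: "p \<in> carrier G \<times> carrier H \<Longrightarrow> tens_pinv p \<in> carrier G \<times> carrier H"
  by (auto simp: tens_pinv_def)

lemma tens_pmult_pinv_left:
  "p \<in> carrier G \<times> carrier H \<Longrightarrow> pmult (tens_pinv p) p = (\<one>\<^bsub>G\<^esub>, \<one>\<^bsub>H\<^esub>)"
  by (auto simp: tens_pmult_def tens_pinv_def G.m_assoc G.f_pow_pow_mult G.f_pow_double)

lemma tens_pmult_one_left:
  "q \<in> carrier G \<times> carrier H \<Longrightarrow> pmult (\<one>\<^bsub>G\<^esub>, \<one>\<^bsub>H\<^esub>) q = q"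
  by (auto simp: tens_pmult_def)

lemma group_tens_group: "group Q"
proof (rule groupI)
  fix X Y assume "X \<in> carrier Q" "Y \<in> carrier Q"
  then show "X \<otimes>\<^bsub>Q\<^esub> Y \<in> carrier Q"
    by (auto elim!: tens_group_carrierE simp: tens_group_mult_cls tens_pmult_closed cls_in_carrier)
next
  show "\<one>\<^bsub>Q\<^esub> \<in> carrier Q"
    by (simp add: one_tens_group cls_in_carrier)
next
  fix X Y Z assume "X \<in> carrier Q" "Y \<in> carrier Q" "Z \<in> carrier Q"
  then show "X \<otimes>\<^bsub>Q\<^esub> Y \<otimes>\<^bsub>Q\<^esub> Z = X \<otimes>\<^bsub>Q\<^esub> (Y \<otimes>\<^bsub>Q\<^esub> Z)"
    by (auto elim!: tens_group_carrierE simp: tens_group_mult_cls tens_pmult_closed tens_pmult_assoc)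
next
  fix X assume "X \<in> carrier Q"
  then show "\<one>\<^bsub>Q\<^esub> \<otimes>\<^bsub>Q\<^esub> X = X"
    by (auto elim!: tens_group_carrierE simp: one_tens_group tens_group_mult_cls tens_pmult_one_left)
next
  fix X assume "X \<in> carrier Q"
  then obtain p where p: "X = cls p" "p \<in> carrier G \<times> carrier H"
    by (auto elim!: tens_group_carrierE)
  then have "cls (tens_pinv p) \<otimes>\<^bsub>Q\<^esub> X = \<one>\<^bsub>Q\<^esub>"
    by (simp add: tens_group_mult_cls tens_pinv_closed tens_pmult_pinv_left one_tens_group)
  then show "\<exists>Y\<in>carrier Q. Y \<otimes>\<^bsub>Q\<^esub> X = \<one>\<^bsub>Q\<^esub>"
    using p cls_in_carrier tens_pinv_closed by blast
qed

lemma inv_tens_group_cls: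
  "p \<in> carrier G \<times> carrier H \<Longrightarrow> inv\<^bsub>Q\<^esub> (cls p) = cls (tens_pinv p)"
  by (simp add: group.inv_equality[OF group_tens_group] tens_group_mult_cls tens_pinv_closed
      tens_pmult_pinv_left one_tens_group cls_in_carrier)

lemma tens_theta_cls:
  assumes "p \<in> carrier G \<times> carrier H"
  shows "tens_theta \<theta>G \<theta>H (cls p) = (\<theta>G (fst p) + \<theta>H (snd p)) mod 2"
proof -
  have "(SOME p'. p' \<in> cls p) \<in> {p, twist p}"
    using someI[of "\<lambda>p'. p' \<in> cls p" p] assms by (simp add: tens_rel_Image)
  then show ?thesis
    using assms by (auto simp: tens_theta_def twist_def)
qed

abbreviation "PT \<equiv> prod_topology TG TH"
abbreviation "QT \<equiv> tens_topology G H fG fH TG TH"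

lemma image_cl_carrier: "cls ` (carrier G \<times> carrier H) = carrier Q"
  by (auto simp: carrier_tens_group quotient_def)

lemma quotient_map_cls: "quotient_map PT QT cls"
  unfolding tens_topology_def carrier_tens_group[symmetric]
  by (rule quotient_map_quotient_topology) (simp add: image_cl_carrier)

lemma topspace_tens_topology: "topspace QT = carrier Q"
  using quotient_imp_surjective_map[OF quotient_map_cls] by (simp add: image_cl_carrier)

lemma continuous_map_twist: "continuous_map PT PT twist"
  unfolding twist_def
  by (intro continuous_map_pairedI topological_group_continuous_mult[OF G.topological_group]
      topological_group_continuous_mult[OF H.topological_group]
      continuous_map_fst continuous_map_snd) simp_all

lemma open_map_cls: "open_map PT QT cls"
  using quotient_map_cls continuous_map_twist
proof (rule open_map_quotient_by_involution)
  fix p q assume "p \<in> topspace PT" "q \<in> topspace PT"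
  then show "cls p = cls q \<longleftrightarrow> q = p \<or> q = twist p"
    by (simp add: tens_rel_Image_eq_iff)
qed

lemma continuous_map_sign:
  assumes "continuous_map X TG a" "continuous_map X TH b"
  shows "continuous_map X TG (\<lambda>z. fG [^]\<^bsub>G\<^esub> (\<theta>G (a z) * \<theta>H (b z)))"
proof -
  have "continuous_map X (discrete_topology {0, 1}) (\<theta>G \<circ> a)"
    and "continuous_map X (discrete_topology {0, 1}) (\<theta>H \<circ> b)"
    using assms G.continuous_map_theta H.continuous_map_theta by (auto intro: continuous_map_compose)
  then have "continuous_map X TG (\<lambda>z. fG [^]\<^bsub>G\<^esub> ((\<theta>G \<circ> a) z * (\<theta>H \<circ> b) z))"
    by (rule continuous_map_discrete_compose2) simp
  then show ?thesis
    by (simp add: o_def)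
qed

lemma continuous_map_tens_pmult:
  "continuous_map (prod_topology PT PT) PT (\<lambda>(p, q). pmult p q)"
  unfolding tens_pmult_def case_prod_beta
  by (intro continuous_map_pairedI continuous_map_sign
      topological_group_continuous_mult[OF G.topological_group]
      topological_group_continuous_mult[OF H.topological_group]
      continuous_map_compose[unfolded o_def, OF continuous_map_fst]
      continuous_map_compose[unfolded o_def, OF continuous_map_snd]
      continuous_map_fst continuous_map_snd)

lemma continuous_map_tens_pinv: "continuous_map PT PT tens_pinv"
  unfolding tens_pinv_def
  by (intro continuous_map_pairedI continuous_map_sign
      topological_group_continuous_mult[OF G.topological_group]
      topological_group_continuous_inv[OF G.topological_group]
      topological_group_continuous_inv[OF H.topological_group]
      continuous_map_fst continuous_map_snd)

lemma continuous_map_cls: "continuous_map PT QT cls"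
  by (rule quotient_imp_continuous_map[OF quotient_map_cls])

lemma continuous_map_tens_group_mult:
  "continuous_map (prod_topology QT QT) QT (\<lambda>(X, Y). X \<otimes>\<^bsub>Q\<^esub> Y)"
proof -
  \<comment> \<open>A product of quotient maps need not be a quotient map; it is one here because cls is open.\<close>
  have "quotient_map (prod_topology PT PT) (prod_topology QT QT) (\<lambda>(p, q). (cls p, cls q))"
  proof (rule continuous_open_imp_quotient_map)
    show "continuous_map (prod_topology PT PT) (prod_topology QT QT) (\<lambda>(p, q). (cls p, cls q))"
      unfolding case_prod_beta
      by (intro continuous_map_pairedI continuous_map_compose[unfolded o_def, OF _ continuous_map_cls]
          continuous_map_fst continuous_map_snd)
    show "open_map (prod_topology PT PT) (prod_topology QT QT) (\<lambda>(p, q). (cls p, cls q))"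
      by (rule open_map_prod_map[OF open_map_cls open_map_cls])
    show "(\<lambda>(p, q). (cls p, cls q)) ` topspace (prod_topology PT PT) = topspace (prod_topology QT QT)"
      by (simp add: image_paired_Times image_cl_carrier topspace_tens_topology)
  qed
  moreover have "continuous_map (prod_topology PT PT) QT ((\<lambda>(X, Y). X \<otimes>\<^bsub>Q\<^esub> Y) \<circ> (\<lambda>(p, q). (cls p, cls q)))"
    using continuous_map_compose[OF continuous_map_tens_pmult continuous_map_cls]
    by (rule continuous_map_eq) (auto simp: tens_group_mult_cls)
  ultimately show ?thesis
    by (rule continuous_compose_quotient_map)
qed

lemma continuous_map_tens_group_inv: "continuous_map QT QT (\<lambda>X. inv\<^bsub>Q\<^esub> X)"
proof (rule continuous_compose_quotient_map[OF quotient_map_cls])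
  show "continuous_map PT QT ((\<lambda>X. inv\<^bsub>Q\<^esub> X) \<circ> cls)"
    using continuous_map_compose[OF continuous_map_tens_pinv continuous_map_cls]
    by (rule continuous_map_eq) (simp add: inv_tens_group_cls)
qed

lemma continuous_map_tens_theta:
  "continuous_map QT (discrete_topology {0, 1}) (tens_theta \<theta>G \<theta>H)"
proof (rule continuous_compose_quotient_map[OF quotient_map_cls])
  have "continuous_map PT (discrete_topology {0, 1}) (\<theta>G \<circ> fst)"
    and "continuous_map PT (discrete_topology {0, 1}) (\<theta>H \<circ> snd)"
    using G.continuous_map_theta H.continuous_map_theta
    by (auto intro: continuous_map_compose continuous_map_fst continuous_map_snd)
  then have "continuous_map PT (discrete_topology {0, 1}) (\<lambda>p. ((\<theta>G \<circ> fst) p + (\<theta>H \<circ> snd) p) mod 2)"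
    by (rule continuous_map_discrete_compose2) auto
  then show "continuous_map PT (discrete_topology {0, 1}) (tens_theta \<theta>G \<theta>H \<circ> cls)"
    by (rule continuous_map_eq) (simp add: tens_theta_cls)
qed

lemma cls_one_f: "cls (\<one>\<^bsub>G\<^esub>, fH) = cls (fG, \<one>\<^bsub>H\<^esub>)"
  using tens_rel_Image_eq_iff[of "(\<one>\<^bsub>G\<^esub>, fH)" "(fG, \<one>\<^bsub>H\<^esub>)"]
  by (simp add: twist_def H.f_square)

lemma fermionic_group_tens_group:
  "fermionic_group Q QT (cls (\<one>\<^bsub>G\<^esub>, fH)) (tens_theta \<theta>G \<theta>H)"
  unfolding fermionic_group_def topological_group_def
proof (intro conjI ballI)
  show "group Q" by (rule group_tens_group)
  show "topspace QT = carrier Q" by (rule topspace_tens_topology)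
  show "continuous_map (prod_topology QT QT) QT (\<lambda>(X, Y). X \<otimes>\<^bsub>Q\<^esub> Y)"
    by (rule continuous_map_tens_group_mult)
  show "continuous_map QT QT (\<lambda>X. inv\<^bsub>Q\<^esub> X)"
    by (rule continuous_map_tens_group_inv)
  show "continuous_map QT (discrete_topology {0, 1}) (tens_theta \<theta>G \<theta>H)"
    by (rule continuous_map_tens_theta)
  show "cls (\<one>\<^bsub>G\<^esub>, fH) \<in> carrier Q"
    by (simp add: cls_in_carrier)
  show "cls (\<one>\<^bsub>G\<^esub>, fH) \<otimes>\<^bsub>Q\<^esub> cls (\<one>\<^bsub>G\<^esub>, fH) = \<one>\<^bsub>Q\<^esub>"
    by (simp add: tens_group_mult_cls tens_pmult_Pair H.f_square one_tens_group)
  show "tens_theta \<theta>G \<theta>H (cls (\<one>\<^bsub>G\<^esub>, fH)) = 0"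
    by (simp add: tens_theta_cls)
next
  fix X assume "X \<in> carrier Q"
  then obtain g h where X: "X = cls (g, h)" "g \<in> carrier G" "h \<in> carrier H"
    by (rule tens_group_carrierE)
  then show "cls (\<one>\<^bsub>G\<^esub>, fH) \<otimes>\<^bsub>Q\<^esub> X = X \<otimes>\<^bsub>Q\<^esub> cls (\<one>\<^bsub>G\<^esub>, fH)"
    by (simp add: tens_group_mult_cls tens_pmult_Pair H.f_central)
  show "tens_theta \<theta>G \<theta>H X \<in> {0, 1}"
    using X by (simp add: tens_theta_cls, arith)
next
  fix X Y assume "X \<in> carrier Q" "Y \<in> carrier Q"
  then obtain g1 h1 g2 h2 where "X = cls (g1, h1)" "Y = cls (g2, h2)"
    and "g1 \<in> carrier G" "h1 \<in> carrier H" "g2 \<in> carrier G" "h2 \<in> carrier H"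
    by (metis tens_group_carrierE)
  then show "tens_theta \<theta>G \<theta>H (X \<otimes>\<^bsub>Q\<^esub> Y) = (tens_theta \<theta>G \<theta>H X + tens_theta \<theta>G \<theta>H Y) mod 2"
    by (simp add: tens_group_mult_cls tens_pmult_Pair tens_theta_cls G.m_assoc G.theta_mult H.theta_mult
        mod_add_eq add_ac)
qed

end

theorem mainTheorem3:
  fixes G :: "'a monoid" and H :: "'b monoid"
  assumes "fermionic_group G TG fG \<theta>G"
      and "fermionic_group H TH fH \<theta>H"
  shows "(\<forall>p1\<in>carrier G \<times> carrier H. \<forall>p1'\<in>carrier G \<times> carrier H.
           \<forall>p2\<in>carrier G \<times> carrier H. \<forall>p2'\<in>carrier G \<times> carrier H.
             tens_class G H fG fH (fst p1) (snd p1) = tens_class G H fG fH (fst p1') (snd p1') \<longrightarrow>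
             tens_class G H fG fH (fst p2) (snd p2) = tens_class G H fG fH (fst p2') (snd p2') \<longrightarrow>
             tens_rel G H fG fH `` {tens_pmult G H fG \<theta>G \<theta>H p1 p2}
               = tens_rel G H fG fH `` {tens_pmult G H fG \<theta>G \<theta>H p1' p2'})
       \<and> tens_class G H fG fH \<one>\<^bsub>G\<^esub> fH = tens_class G H fG fH fG \<one>\<^bsub>H\<^esub>
       \<and> fermionic_group (tens_group G H fG fH \<theta>G \<theta>H) (tens_topology G H fG fH TG TH)
           (tens_class G H fG fH \<one>\<^bsub>G\<^esub> fH) (tens_theta \<theta>G \<theta>H)"
proof -
  interpret fermionic_pair G TG fG \<theta>G H TH fH \<theta>H
    using assms by (simp add: fermionic_pair_def fermionic_def)
  have tens_class_eq: "tens_class G H fG fH g h = cls (g, h)" for g h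
    by (simp add: tens_class_def)
  have "\<forall>p1\<in>carrier G \<times> carrier H. \<forall>p1'\<in>carrier G \<times> carrier H.
      \<forall>p2\<in>carrier G \<times> carrier H. \<forall>p2'\<in>carrier G \<times> carrier H.
        cls p1 = cls p1' \<longrightarrow> cls p2 = cls p2' \<longrightarrow> cls (pmult p1 p2) = cls (pmult p1' p2')"
    by (intro ballI impI tens_pmult_respects)
  then show ?thesis
    unfolding tens_class_eq prod.collapse using cls_one_f fermionic_group_tens_group by (intro conjI)
qed

end
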